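(* Let $\mathcal{M}\subset\mathbb{R}^d$ be a set of $n$ distinct points with the Euclidean metric, $k$ an integer with $2\le k<n$, and $0<\epsilon<\tfrac12$. Let $\epsilon_1=\frac{\epsilon}{3+2\epsilon}$. Let $P_1$ be the output of the farthest-point-insertion procedure on $(\mathcal{M},k)$ (choose $q_1,q_2\in\mathcal{M}$ realizing $\operatorname{diam}(\mathcal{M})$, set $S_2=\{q_1,q_2\}$, and for $i=2,\dots,k-1$ add a point of $\mathcal{M}$ maximizing $\delta(\cdot,S_i)$), and let $\epsilon_2=\frac{\epsilon_1R_{P_1}}{2\sqrt d}$. Partition $\mathbb{R}^d$ by an axis-parallel grid of cubic cells of side length $\epsilon_2$, and let $\mathcal{C}\subset\mathcal{M}$ contain exactly one (arbitrarily chosen) point of $\mathcal{M}$ from each cell that intersects $\mathcal{M}$. Let $P\subset\mathcal{C}$ be a $k$-point subset of $\mathcal{C}$ minimizing $GR_P$ (gap ratio with respect to $\mathcal{M}$) among all $k$-subsets of $\mathcal{C}$. Then $GR_P\le(1+\epsilon)\,GR_{OPT}$, where $GR_{OPT}=\min\{GR_{P'}:P'\subset\mathcal{M},\ |P'|=k\}$.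
   Context: For a finite set $S\subset\mathcal{M}$ with $|S|\ge2$: $\delta(x,S)=\min_{s\in S}\|x-s\|$, $R_S=\max_{x\in\mathcal{M}}\delta(x,S)$, $r_S=\min_{p,q\in S,\,p\ne q}\|p-q\|/2$, and the gap ratio is $GR_S=R_S/r_S$ (all with respect to the whole set $\mathcal{M}$). *)

theory Defs
  imports "HOL-Analysis.Analysis"
begin

definition delta :: "real^'d \<Rightarrow> (real^'d) set \<Rightarrow> real" where
  "delta x S = Min ((\<lambda>s. norm (x - s)) ` S)"

definition covR :: "(real^'d) set \<Rightarrow> (real^'d) set \<Rightarrow> real" where
  "covR M S = Max ((\<lambda>x. delta x S) ` M)"

definition packr :: "(real^'d) set \<Rightarrow> real" where
  "packr S = Min {norm (p - q) / 2 | p q. p \<in> S \<and> q \<in> S \<and> p \<noteq> q}"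

definition GR :: "(real^'d) set \<Rightarrow> (real^'d) set \<Rightarrow> real" where
  "GR M S = covR M S / packr S"

definition GR_OPT :: "(real^'d) set \<Rightarrow> nat \<Rightarrow> real" where
  "GR_OPT M k = Min {GR M P' | P'. P' \<subseteq> M \<and> card P' = k}"

text \<open>qs is a possible run (with arbitrary tie breaking) of farthest-point insertion
  on (M,k): qs!0, qs!1 realize the diameter of M, and for i = 2..k-1 the point qs!i
  is a point of M maximizing delta(., {qs!0,...,qs!(i-1)}).\<close>
definition fpi_run :: "(real^'d) set \<Rightarrow> nat \<Rightarrow> (real^'d) list \<Rightarrow> bool" where
  "fpi_run M k qs \<longleftrightarrow>
     length qs = k \<and> set qs \<subseteq> M \<and>
     (\<forall>x\<in>M. \<forall>y\<in>M. norm (x - y) \<le> norm (qs!0 - qs!1)) \<and>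
     (\<forall>i. 2 \<le> i \<and> i < k \<longrightarrow>
        (\<forall>x\<in>M. delta x (set (take i qs)) \<le> delta (qs!i) (set (take i qs))))"

definition grid_cell :: "real^'d \<Rightarrow> real \<Rightarrow> real^'d \<Rightarrow> int^'d" where
  "grid_cell o' e x = (\<chi> i. \<lfloor>(x$i - o'$i) / e\<rfloor>)"

end

theory Submission
  imports Defs
begin

text \<open>Farthest-point insertion is a 2-approximation: its output $Q$ has pairwise distances at
  least $R_Q$, so $GR_Q \le 2$, and $R_Q \le 2R_S$ for every $k$-set $S$. Hence an optimal set
  $O$ satisfies $R_O \le 2r_O$ and $R_Q \le 2R_O$. Replacing each point of $O$ by the chosen
  representative of its grid cell moves it by at most $\delta = \epsilon_1 R_Q/2$, with
  $\delta \le \epsilon_1 R_O$ and $\delta \le 2\epsilon_1 r_O < r_O$; the result is a $k$-subset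
  of $\mathcal{C}$ with gap ratio at most
  $(R_O+\delta)/(r_O-\delta) \le \frac{1+\epsilon_1}{1-2\epsilon_1} GR_O = (1+\epsilon)GR_O$.\<close>

lemma delta_le: "finite S \<Longrightarrow> s \<in> S \<Longrightarrow> delta x S \<le> norm (x - s)"
  unfolding delta_def by (rule Min_le) auto

lemma delta_attained:
  assumes "finite S" "S \<noteq> {}"
  obtains s where "s \<in> S" "delta x S = norm (x - s)"
proof -
  have "delta x S \<in> (\<lambda>s. norm (x - s)) ` S"
    unfolding delta_def using assms by (intro Min_in) auto
  then show ?thesis using that by auto
qed

lemma delta_antimono: "finite T \<Longrightarrow> S \<subseteq> T \<Longrightarrow> S \<noteq> {} \<Longrightarrow> delta x T \<le> delta x S"
  by (metis delta_attained delta_le finite_subset subsetD)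

lemma delta_nonneg: "finite S \<Longrightarrow> S \<noteq> {} \<Longrightarrow> 0 \<le> delta x S"
  by (metis delta_attained norm_ge_zero)

lemma covR_ge: "finite M \<Longrightarrow> x \<in> M \<Longrightarrow> delta x S \<le> covR M S"
  unfolding covR_def by (rule Max_ge) auto

lemma covR_attained:
  assumes "finite M" "M \<noteq> {}"
  obtains x where "x \<in> M" "covR M S = delta x S"
proof -
  have "covR M S \<in> (\<lambda>x. delta x S) ` M"
    unfolding covR_def using assms by (intro Max_in) auto
  then show ?thesis using that by auto
qed

lemma covR_le: "finite M \<Longrightarrow> M \<noteq> {} \<Longrightarrow> (\<And>x. x \<in> M \<Longrightarrow> delta x S \<le> a) \<Longrightarrow> covR M S \<le> a"
  unfolding covR_def by (subst Max_le_iff) auto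

lemma covR_nonneg: "finite M \<Longrightarrow> x \<in> M \<Longrightarrow> finite S \<Longrightarrow> S \<noteq> {} \<Longrightarrow> 0 \<le> covR M S"
  by (meson covR_ge delta_nonneg order_trans)

lemma card_ge_2_obtain:
  assumes "2 \<le> card S"
  obtains p q where "p \<in> S" "q \<in> S" "p \<noteq> q"
proof -
  obtain T where "T \<subseteq> S" "card T = 2" using assms by (meson obtain_subset_with_card_n)
  then show ?thesis using that by (auto simp: card_2_iff)
qed

lemma finite_half_distances:
  "finite S \<Longrightarrow> finite {norm (p - q) / 2 | p q. p \<in> S \<and> q \<in> S \<and> p \<noteq> q}"
  by (rule finite_subset[of _ "(\<lambda>(p, q). norm (p - q) / 2) ` (S \<times> S)"]) force+

lemma packr_le: "finite S \<Longrightarrow> p \<in> S \<Longrightarrow> q \<in> S \<Longrightarrow> p \<noteq> q \<Longrightarrow> packr S \<le> norm (p - q) / 2"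
  unfolding packr_def by (rule Min_le[OF finite_half_distances]) auto

lemma packr_attained:
  assumes "2 \<le> card S"
  obtains p q where "p \<in> S" "q \<in> S" "p \<noteq> q" "packr S = norm (p - q) / 2"
proof -
  have "finite S" using assms by (intro card_ge_0_finite) simp
  obtain p q where "p \<in> S" "q \<in> S" "p \<noteq> q" using assms card_ge_2_obtain by blast
  then have "packr S \<in> {norm (p - q) / 2 | p q. p \<in> S \<and> q \<in> S \<and> p \<noteq> q}"
    unfolding packr_def using \<open>finite S\<close> by (intro Min_in finite_half_distances) blast+
  then show ?thesis using that by auto
qed

lemma packr_ge:
  "2 \<le> card S \<Longrightarrow> (\<And>p q. p \<in> S \<Longrightarrow> q \<in> S \<Longrightarrow> p \<noteq> q \<Longrightarrow> a \<le> norm (p - q) / 2) \<Longrightarrow> a \<le> packr S"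
  by (metis packr_attained)

lemma packr_pos: "2 \<le> card S \<Longrightarrow> 0 < packr S"
  by (metis packr_attained divide_pos_pos right_minus_eq zero_less_norm_iff zero_less_numeral)

lemma norm_le_sqrt_card_if_same_grid_cell:
  fixes c x o' :: "real^'d"
  assumes "0 < e" "grid_cell o' e c = grid_cell o' e x"
  shows "norm (c - x) \<le> sqrt (real CARD('d)) * e"
proof -
  have coord: "\<bar>(c - x)$i\<bar> \<le> e" for i
  proof -
    have "\<lfloor>(c$i - o'$i) / e\<rfloor> = \<lfloor>(x$i - o'$i) / e\<rfloor>"
      using arg_cong[OF assms(2), of "\<lambda>v. v $ i"] unfolding grid_cell_def by simp
    then have "\<bar>(c$i - o'$i) / e - (x$i - o'$i) / e\<bar> < 1"
      by linarith
    then have "\<bar>(c$i - x$i) / e\<bar> < 1" by (simp add: diff_divide_distrib)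
    then show ?thesis using assms(1) by (simp add: abs_divide divide_less_eq)
  qed
  have "norm (c - x) = sqrt (\<Sum>i\<in>UNIV. ((c - x)$i)^2)"
    by (simp add: norm_vec_def L2_set_def)
  also have "\<dots> \<le> sqrt (\<Sum>i\<in>(UNIV::'d set). e^2)"
    using coord assms(1) by (intro real_sqrt_le_mono sum_mono) (metis abs_le_square_iff abs_of_pos)
  also have "\<dots> = sqrt (real CARD('d)) * e"
    using assms(1) by (simp add: real_sqrt_mult)
  finally show ?thesis .
qed

lemma grid_representatives_close:
  fixes M C :: "(real^'d) set"
  assumes "0 < e" "\<forall>x\<in>M. \<exists>c\<in>C. grid_cell o' e c = grid_cell o' e x"
  obtains s where "\<forall>x\<in>M. s x \<in> C \<and> norm (s x - x) \<le> sqrt (real CARD('d)) * e"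
proof -
  have "\<forall>x\<in>M. \<exists>c. c \<in> C \<and> grid_cell o' e c = grid_cell o' e x" using assms(2) by blast
  then obtain s where "\<forall>x\<in>M. s x \<in> C \<and> grid_cell o' e (s x) = grid_cell o' e x"
    by (rule bchoice[THEN exE])
  then show ?thesis using that norm_le_sqrt_card_if_same_grid_cell[OF assms(1)] by blast
qed

lemma norm_diff_image_ge:
  assumes "finite S" "a \<in> S" "b \<in> S" "a \<noteq> b" "\<forall>x\<in>S. norm (f x - x) \<le> \<delta>"
  shows "2 * packr S - 2 * \<delta> \<le> norm (f a - f b)"
proof -
  have "norm (a - b) = norm ((a - f a) + (f a - f b) + (f b - b))" by simp
  also have "\<dots> \<le> norm ((a - f a) + (f a - f b)) + norm (f b - b)" by (rule norm_triangle_ineq)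
  also have "\<dots> \<le> norm (a - f a) + norm (f a - f b) + norm (f b - b)"
    by (intro add_right_mono norm_triangle_ineq)
  finally have "norm (a - b) \<le> norm (a - f a) + norm (f a - f b) + norm (f b - b)" .
  moreover have "norm (a - f a) \<le> \<delta>" "norm (f b - b) \<le> \<delta>"
    using assms(2,3,5) by (auto simp: norm_minus_commute)
  moreover have "2 * packr S \<le> norm (a - b)" using packr_le[OF assms(1-4)] by simp
  ultimately show ?thesis by linarith
qed

lemma inj_on_if_moves_less_packr:
  assumes "finite S" "\<forall>x\<in>S. norm (f x - x) \<le> \<delta>" "\<delta> < packr S"
  shows "inj_on f S"
proof (rule inj_onI, rule ccontr)
  fix a b assume "a \<in> S" "b \<in> S" "f a = f b" "a \<noteq> b"
  then show False using norm_diff_image_ge[OF assms(1) _ _ _ assms(2), of a b] assms(3) by simp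
qed

lemma packr_image_ge:
  assumes "2 \<le> card S" "\<forall>x\<in>S. norm (f x - x) \<le> \<delta>" "\<delta> < packr S"
  shows "packr S - \<delta> \<le> packr (f ` S)"
proof -
  have "finite S" using assms(1) by (intro card_ge_0_finite) simp
  have "inj_on f S" by (rule inj_on_if_moves_less_packr[OF \<open>finite S\<close> assms(2,3)])
  then have "2 \<le> card (f ` S)" using assms(1) by (simp add: card_image)
  then show ?thesis
    by (rule packr_ge) (use norm_diff_image_ge[OF \<open>finite S\<close> _ _ _ assms(2)] in fastforce)
qed

lemma covR_image_le:
  assumes "finite M" "M \<noteq> {}" "finite S" "S \<noteq> {}" "\<forall>x\<in>S. norm (f x - x) \<le> \<delta>"
  shows "covR M (f ` S) \<le> covR M S + \<delta>"
proof (rule covR_le[OF assms(1,2)])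
  fix x assume "x \<in> M"
  obtain s where s: "s \<in> S" "delta x S = norm (x - s)" by (rule delta_attained[OF assms(3,4)])
  have "delta x (f ` S) \<le> norm (x - f s)" using s(1) assms(3) by (intro delta_le) auto
  also have "\<dots> \<le> norm (x - s) + norm (f s - s)"
    using norm_triangle_ineq[of "x - s" "s - f s"] by (simp add: norm_minus_commute)
  also have "\<dots> \<le> covR M S + \<delta>"
    using s covR_ge[OF assms(1) \<open>x \<in> M\<close>, of S] assms(5) by fastforce
  finally show "delta x (f ` S) \<le> covR M S + \<delta>" .
qed

lemma GR_image_le:
  assumes "finite M" "S \<subseteq> M" "2 \<le> card S"
    and moves: "\<forall>x\<in>S. norm (f x - x) \<le> \<delta>" and "\<delta> < packr S"
  shows "GR M (f ` S) \<le> (covR M S + \<delta>) / (packr S - \<delta>)"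
proof -
  have "finite S" using assms(3) by (intro card_ge_0_finite) simp
  obtain p q where pq: "p \<in> S" "q \<in> S" "p \<noteq> q" using assms(3) by (rule card_ge_2_obtain)
  have "0 \<le> \<delta>" using moves pq(1) norm_ge_zero order_trans by blast
  have "0 \<le> covR M S" using covR_nonneg assms(1,2) \<open>finite S\<close> pq(1) by blast
  show ?thesis
    unfolding GR_def
    using covR_image_le[OF assms(1) _ \<open>finite S\<close> _ moves] packr_image_ge[OF assms(3) moves assms(5)]
      \<open>0 \<le> \<delta>\<close> \<open>0 \<le> covR M S\<close> assms(2,5) pq(1)
    by (intro frac_le) auto
qed

lemma separated_le_twice_covR:
  assumes "finite M" "T \<subseteq> M" "finite Q" "Q \<noteq> {}" "card Q < card T"
    and separated: "\<forall>u\<in>T. \<forall>v\<in>T. u \<noteq> v \<longrightarrow> a \<le> norm (u - v)"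
  shows "a \<le> 2 * covR M Q"
proof -
  define nearest where "nearest u = (SOME q. q \<in> Q \<and> delta u Q = norm (u - q))" for u
  have nearest: "nearest u \<in> Q \<and> delta u Q = norm (u - nearest u)" for u
    unfolding nearest_def by (rule someI_ex) (meson delta_attained assms(3,4))
  have "finite T" using assms(5) by (metis card.infinite not_less0)
  have "\<not> inj_on nearest T"
    using card_inj_on_le[OF _ _ assms(3), of nearest T] nearest assms(5) by fastforce
  then obtain u v where uv: "u \<in> T" "v \<in> T" "u \<noteq> v" "nearest u = nearest v"
    unfolding inj_on_def by blast
  have "a \<le> norm (u - v)" using separated uv by blast
  also have "\<dots> \<le> norm (u - nearest u) + norm (v - nearest v)"
    using norm_triangle_ineq4[of "u - nearest u" "v - nearest v"] uv(4) by simp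
  also have "\<dots> = delta u Q + delta v Q" using nearest by simp
  also have "\<dots> \<le> 2 * covR M Q"
    using covR_ge[OF assms(1), of _ Q] uv(1,2) assms(2) by (smt (verit) subsetD)
  finally show ?thesis .
qed

context
  fixes M :: "(real^'d) set" and k :: nat and qs :: "(real^'d) list"
  assumes finite_M: "finite M" and two_le_k: "2 \<le> k" and run: "fpi_run M k qs"
begin

lemma fpi_run_length_set: "length qs = k" "set qs \<subseteq> M"
  using run unfolding fpi_run_def by auto

text \<open>The covering radius is attained at some $x \in M$; since $x$ was a candidate at every
  insertion step, each inserted point is at least as far from its predecessors as $x$ is from
  the final set.\<close>
lemma covR_fpi_run_le_dist_earlier:
  assumes "i < j" "j < k"
  shows "covR M (set qs) \<le> norm (qs!j - qs!i)"
proof -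
  have qs_in: "qs!l \<in> set qs" if "l < k" for l using that fpi_run_length_set by simp
  then have "M \<noteq> {}" using fpi_run_length_set two_le_k by fastforce
  then obtain x where x: "x \<in> M" "covR M (set qs) = delta x (set qs)"
    using covR_attained[OF finite_M] by metis
  show ?thesis
  proof (cases "j = 1")
    case True
    then have "i = 0" using assms by simp
    have "delta x (set qs) \<le> norm (x - qs!0)" using qs_in two_le_k by (intro delta_le) auto
    also have "\<dots> \<le> norm (qs!0 - qs!1)"
    proof -
      have "qs!0 \<in> M" using qs_in[of 0] two_le_k fpi_run_length_set(2) by auto
      then show ?thesis using run x(1) unfolding fpi_run_def by blast
    qed
    finally show ?thesis using x True \<open>i = 0\<close> by (simp add: norm_minus_commute)
  next
    case False
    then have "2 \<le> j" using assms by simp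
    have i_in: "qs!i \<in> set (take j qs)"
      using assms fpi_run_length_set by (auto simp: in_set_conv_nth intro!: exI[of _ i])
    then have "set (take j qs) \<noteq> {}" by (metis equals0D)
    have "delta x (set qs) \<le> delta x (set (take j qs))"
      using \<open>set (take j qs) \<noteq> {}\<close> by (intro delta_antimono set_take_subset) auto
    also have "\<dots> \<le> delta (qs!j) (set (take j qs))"
      using run x(1) \<open>2 \<le> j\<close> assms(2) unfolding fpi_run_def by blast
    also have "\<dots> \<le> norm (qs!j - qs!i)" using i_in by (intro delta_le) auto
    finally show ?thesis using x by simp
  qed
qed

lemma covR_fpi_run_le_dist:
  "i < k \<Longrightarrow> j < k \<Longrightarrow> i \<noteq> j \<Longrightarrow> covR M (set qs) \<le> norm (qs!i - qs!j)"
  using covR_fpi_run_le_dist_earlier[of i j] covR_fpi_run_le_dist_earlier[of j i]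
  by (cases "i < j") (auto simp: norm_minus_commute)

lemma covR_fpi_run_le_dist_set:
  "p \<in> set qs \<Longrightarrow> q \<in> set qs \<Longrightarrow> p \<noteq> q \<Longrightarrow> covR M (set qs) \<le> norm (p - q)"
  by (metis covR_fpi_run_le_dist fpi_run_length_set(1) in_set_conv_nth)

context
  assumes k_less: "k < card M"
begin

lemma covR_fpi_run_pos: "0 < covR M (set qs)"
proof -
  have "card (set qs) < card M" using card_length[of qs] fpi_run_length_set k_less by simp
  then have "\<not> M \<subseteq> set qs" using card_mono[OF List.finite_set, of M qs] by linarith
  then obtain x where x: "x \<in> M" "x \<notin> set qs" by blast
  have "set qs \<noteq> {}" using fpi_run_length_set two_le_k by auto
  then obtain q where "q \<in> set qs" "delta x (set qs) = norm (x - q)" by (rule delta_attained[OF List.finite_set])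
  then have "0 < delta x (set qs)" using x(2) by auto
  also have "\<dots> \<le> covR M (set qs)" using covR_ge[OF finite_M x(1)] .
  finally show ?thesis .
qed

lemma card_fpi_run: "card (set qs) = k"
proof -
  have "distinct qs"
    unfolding distinct_conv_nth using covR_fpi_run_le_dist covR_fpi_run_pos fpi_run_length_set
    by fastforce
  then show ?thesis using distinct_card fpi_run_length_set by blast
qed

lemma GR_fpi_run_le_2: "GR M (set qs) \<le> 2"
proof -
  have "covR M (set qs) / 2 \<le> packr (set qs)"
    using card_fpi_run two_le_k covR_fpi_run_le_dist_set by (intro packr_ge) auto
  then show ?thesis
    unfolding GR_def using covR_fpi_run_pos by (simp add: divide_le_eq)
qed

lemma covR_le_twice_packr_if_GR_le_fpi_run:
  assumes "2 \<le> card S" "GR M S \<le> GR M (set qs)"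
  shows "covR M S \<le> 2 * packr S"
proof -
  have "covR M S / packr S \<le> 2" using assms(2) GR_fpi_run_le_2 unfolding GR_def by simp
  then show ?thesis using packr_pos[OF assms(1)] by (simp add: divide_le_eq)
qed

text \<open>The point of $M$ attaining the covering radius, together with the output, gives $k+1$
  points at mutual distance at least that radius.\<close>
lemma covR_fpi_run_le_twice:
  assumes "Q \<subseteq> M" "card Q = k"
  shows "covR M (set qs) \<le> 2 * covR M Q"
proof -
  have "M \<noteq> {}" using fpi_run_length_set two_le_k by fastforce
  then obtain x where x: "x \<in> M" "covR M (set qs) = delta x (set qs)"
    using covR_attained[OF finite_M] by metis
  have far: "covR M (set qs) \<le> norm (x - q)" if "q \<in> set qs" for q
    using x(2) that by (simp add: delta_le)
  then have "x \<notin> set qs" using covR_fpi_run_pos by fastforce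
  show ?thesis
  proof (rule separated_le_twice_covR[OF finite_M, of "insert x (set qs)"])
    show "insert x (set qs) \<subseteq> M" using x(1) fpi_run_length_set by auto
    show "finite Q" "Q \<noteq> {}" using assms finite_M finite_subset two_le_k by auto
    show "card Q < card (insert x (set qs))" using \<open>x \<notin> set qs\<close> card_fpi_run assms(2) by simp
    show "\<forall>u\<in>insert x (set qs). \<forall>v\<in>insert x (set qs). u \<noteq> v \<longrightarrow> covR M (set qs) \<le> norm (u - v)"
      using far covR_fpi_run_le_dist_set by (auto simp: norm_minus_commute)
  qed
qed

end

end

lemma GR_OPT_le: "finite M \<Longrightarrow> P \<subseteq> M \<Longrightarrow> card P = k \<Longrightarrow> GR_OPT M k \<le> GR M P"
  unfolding GR_OPT_def by (rule Min_le) (auto intro: finite_subset[of _ "GR M ` Pow M"])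

lemma GR_OPT_attained:
  assumes "finite M" "k \<le> card M"
  obtains P where "P \<subseteq> M" "card P = k" "GR M P = GR_OPT M k"
proof -
  obtain P where "P \<subseteq> M" "card P = k" using assms(2) by (meson obtain_subset_with_card_n)
  then have "GR_OPT M k \<in> {GR M P' | P'. P' \<subseteq> M \<and> card P' = k}"
    unfolding GR_OPT_def using assms(1)
    by (intro Min_in) (auto intro: finite_subset[of _ "GR M ` Pow M"])
  then show ?thesis using that by auto
qed

lemma perturbed_ratio_le:
  fixes e R r R1 :: real
  assumes "0 < e" "2 * e < 1" "0 < r" "0 < R1" "R1 \<le> 2 * R" "R \<le> 2 * r"
  shows "e * R1 / 2 < r" "(R + e * R1 / 2) / (r - e * R1 / 2) \<le> (1 + e) / (1 - 2 * e) * (R / r)"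
proof -
  have "e * R1 / 2 \<le> e * R" "e * R \<le> 2 * e * r" using assms by simp_all
  moreover have "2 * e * r < r" using assms(2,3) by simp
  ultimately show "e * R1 / 2 < r" by linarith
  have "(R + e * R1 / 2) / (r - e * R1 / 2) \<le> ((1 + e) * R) / ((1 - 2 * e) * r)"
    using assms \<open>e * R1 / 2 \<le> e * R\<close> \<open>e * R \<le> 2 * e * r\<close>
    by (intro frac_le) (auto simp: algebra_simps)
  then show "(R + e * R1 / 2) / (r - e * R1 / 2) \<le> (1 + e) / (1 - 2 * e) * (R / r)"
    by simp
qed

theorem theorem9:
  fixes M :: "(real^'d) set" and n k :: nat and \<epsilon> :: real
    and qs :: "(real^'d) list" and o' :: "real^'d"
    and C P :: "(real^'d) set"
  assumes "finite M" and "card M = n"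
    and "2 \<le> k" and "k < n"
    and "0 < \<epsilon>" and "\<epsilon> < 1/2"
    and "fpi_run M k qs"
    and "C \<subseteq> M"
    and "\<forall>x\<in>M. \<exists>!c. c \<in> C \<and>
           grid_cell o' ((\<epsilon> / (3 + 2*\<epsilon>)) * covR M (set qs) / (2 * sqrt (real CARD('d)))) c
         = grid_cell o' ((\<epsilon> / (3 + 2*\<epsilon>)) * covR M (set qs) / (2 * sqrt (real CARD('d)))) x"
    and "P \<subseteq> C" and "card P = k"
    and "\<forall>P'. P' \<subseteq> C \<and> card P' = k \<longrightarrow> GR M P \<le> GR M P'"
  shows "GR M P \<le> (1 + \<epsilon>) * GR_OPT M k"
proof -
  define e where "e = \<epsilon> / (3 + 2*\<epsilon>)"
  define R1 where "R1 = covR M (set qs)"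
  have e: "0 < e" "2 * e < 1" "(1 + e) / (1 - 2 * e) = 1 + \<epsilon>"
    unfolding e_def using assms(5,6) by (auto simp: field_simps)
  have "0 < R1" unfolding R1_def using covR_fpi_run_pos assms(1-4,7) by blast
  define side where "side = e * R1 / (2 * sqrt (real CARD('d)))"
  have "0 < side" "sqrt (real CARD('d)) * side = e * R1 / 2"
    unfolding side_def using e(1) \<open>0 < R1\<close> by auto
  moreover have "\<forall>x\<in>M. \<exists>c\<in>C. grid_cell o' side c = grid_cell o' side x"
    using assms(9) unfolding side_def e_def R1_def by (meson ex1_implies_ex)
  ultimately obtain s where s: "\<forall>x\<in>M. s x \<in> C \<and> norm (s x - x) \<le> e * R1 / 2"
    using grid_representatives_close[of side M C o'] by metis
  obtain Opt where Opt: "Opt \<subseteq> M" "card Opt = k" "GR M Opt = GR_OPT M k"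
    using GR_OPT_attained[OF assms(1)] assms(2,4) by (metis less_imp_le)
  have "2 \<le> card Opt" using Opt(2) assms(3) by simp
  have "R1 \<le> 2 * covR M Opt"
    unfolding R1_def using covR_fpi_run_le_twice[OF assms(1,3,7)] assms(2,4) Opt(1,2) by simp
  moreover have "covR M Opt \<le> 2 * packr Opt"
    using covR_le_twice_packr_if_GR_le_fpi_run[OF assms(1,3,7) _ \<open>2 \<le> card Opt\<close>]
      GR_OPT_le[OF assms(1) fpi_run_length_set(2)[OF assms(1,3,7)]] card_fpi_run[OF assms(1,3,7)]
      Opt(3) assms(2,4) by simp
  ultimately have error: "e * R1 / 2 < packr Opt"
    "(covR M Opt + e * R1 / 2) / (packr Opt - e * R1 / 2) \<le> (1 + \<epsilon>) * (covR M Opt / packr Opt)"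
    using perturbed_ratio_le[OF e(1,2) packr_pos[OF \<open>2 \<le> card Opt\<close>] \<open>0 < R1\<close>] e(3) by simp_all
  have moves: "\<forall>x\<in>Opt. norm (s x - x) \<le> e * R1 / 2" using s Opt(1) by blast
  have "s ` Opt \<subseteq> C" using s Opt(1) by blast
  moreover have "card (s ` Opt) = k"
    using inj_on_if_moves_less_packr[OF finite_subset[OF Opt(1) assms(1)] moves error(1)] Opt(2)
    by (simp add: card_image)
  ultimately have "GR M P \<le> GR M (s ` Opt)" using assms(12) by blast
  also have "\<dots> \<le> (covR M Opt + e * R1 / 2) / (packr Opt - e * R1 / 2)"
    using GR_image_le[OF assms(1) Opt(1) \<open>2 \<le> card Opt\<close> moves error(1)] .
  also have "\<dots> \<le> (1 + \<epsilon>) * GR_OPT M k"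
    using error(2) Opt(3) unfolding GR_def by simp
  finally show ?thesis .
qed

end
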